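(* Let $(Q,\cdot)$ and $(Q,\ast)$ be right modular magmas on the same set $Q$, where $(Q,\cdot)$ has a left unit $e$ and $(Q,\ast)$ has a left unit $\overline{e}$. Then $(Q,\cdot,\ast)$ is a double magma, i.e. $(x\cdot y)\ast(z\cdot w)=(x\ast z)\cdot(y\ast w)$ for all $x,y,z,w\in Q$, if and only if there is an involutive automorphism $\alpha$ of $(Q,\ast)$ such that $x\ast y=\alpha x\cdot y$ for all $x,y\in Q$. In this case $\alpha x=(x\ast\overline{e})\cdot\overline{e}=(x\cdot\overline{e})\ast\overline{e}$ for all $x\in Q$.
   Context: A magma $(Q,\cdot)$ is right modular if $(xy)z=(zy)x$ for all $x,y,z\in Q$. An element $l$ is a left unit of a magma if $lx=x$ for all $x$. A mapping $\alpha:Q\to Q$ is involutive if $\alpha\circ\alpha$ is the identity map of $Q$. *)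

theory Defs
  imports Main
begin

definition right_modular :: "('a \<Rightarrow> 'a \<Rightarrow> 'a) \<Rightarrow> bool" where
  "right_modular m \<longleftrightarrow> (\<forall>x y z. m (m x y) z = m (m z y) x)"

definition left_unit :: "('a \<Rightarrow> 'a \<Rightarrow> 'a) \<Rightarrow> 'a \<Rightarrow> bool" where
  "left_unit m l \<longleftrightarrow> (\<forall>x. m l x = x)"

definition involutive :: "('a \<Rightarrow> 'a) \<Rightarrow> bool" where
  "involutive f \<longleftrightarrow> f \<circ> f = id"

definition magma_automorphism :: "('a \<Rightarrow> 'a \<Rightarrow> 'a) \<Rightarrow> ('a \<Rightarrow> 'a) \<Rightarrow> bool" where
  "magma_automorphism m f \<longleftrightarrow> bij f \<and> (\<forall>x y. f (m x y) = m (f x) (f y))"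

definition double_magma :: "('a \<Rightarrow> 'a \<Rightarrow> 'a) \<Rightarrow> ('a \<Rightarrow> 'a \<Rightarrow> 'a) \<Rightarrow> bool" where
  "double_magma dot ast \<longleftrightarrow>
     (\<forall>x y z w. ast (dot x y) (dot z w) = dot (ast x z) (ast y w))"

end

theory Submission
  imports Defs
begin

text \<open>If \<open>\<cdot>\<close> and \<open>\<ast>\<close> interchange and have left units \<open>e\<close>, \<open>e\<^sub>b\<close>, then interchanging
  \<open>(e \<cdot> e\<^sub>b) \<ast> (z \<cdot> w)\<close> gives \<open>(e \<ast> z) \<cdot> w = z \<cdot> w\<close>, whence \<open>e \<ast> z = z\<close> and the units coincide. Putting \<open>e\<close> in the second and third slot
  gives \<open>(x \<cdot> e) \<ast> y = (x \<ast> e) \<cdot> y\<close>, and since \<open>z \<mapsto> (z \<cdot> e) \<cdot> e\<close> is the identity in a right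
  modular magma with left unit \<open>e\<close>, this reads \<open>x \<ast> y = \<alpha> x \<cdot> y\<close> with \<open>\<alpha> x = (x \<ast> e) \<cdot> e\<close>.
  Conversely, such a twist by an involutive automorphism turns the interchange law into the
  medial law \<open>(a \<cdot> b) \<cdot> (c \<cdot> d) = (a \<cdot> c) \<cdot> (b \<cdot> d)\<close>, which every right modular magma satisfies.\<close>

lemma right_modular_medial:
  assumes "right_modular m"
  shows "m (m a b) (m c d) = m (m a c) (m b d)"
  using assms unfolding right_modular_def by metis

context
  fixes m :: "'a \<Rightarrow> 'a \<Rightarrow> 'a" and u :: 'a
  assumes rm: "right_modular m" and lu: "left_unit m u"
begin

lemma right_modular_unit_swap: "m (m z x) u = m x z"
  using rm lu unfolding right_modular_def left_unit_def by metis

lemma right_modular_unit_twice: "m (m x u) u = x"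
  using right_modular_unit_swap lu unfolding left_unit_def by metis

lemma right_modular_left_commute: "m a (m b c) = m b (m a c)"
  using right_modular_unit_swap rm unfolding right_modular_def by metis

lemma right_modular_left_unit_unique:
  assumes "left_unit m v"
  shows "v = u"
  using assms right_modular_unit_twice lu unfolding left_unit_def by metis

end

lemma involutive_apply_twice: "involutive f \<Longrightarrow> f (f x) = x"
  unfolding involutive_def by (metis comp_apply id_apply)

lemma involutive_bij: "involutive f \<Longrightarrow> bij f"
  unfolding involutive_def by (rule o_bij)

lemma twist_automorphism_hom:
  assumes twist: "\<And>x y. ast x y = dot (\<alpha> x) y"
    and inv: "\<And>x. \<alpha> (\<alpha> x) = x"
    and hom: "\<And>x y. \<alpha> (ast x y) = ast (\<alpha> x) (\<alpha> y)"
  shows "\<alpha> (dot x y) = dot (\<alpha> x) (\<alpha> y)"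
proof -
  have "\<alpha> (dot x y) = \<alpha> (ast (\<alpha> x) y)" using twist inv by simp
  also have "\<dots> = ast x (\<alpha> y)" using hom inv by simp
  finally show ?thesis using twist by simp
qed

lemma double_magma_if_twist:
  assumes "right_modular dot"
    and twist: "\<And>x y. ast x y = dot (\<alpha> x) y"
    and hom: "\<And>x y. \<alpha> (dot x y) = dot (\<alpha> x) (\<alpha> y)"
  shows "double_magma dot ast"
  unfolding double_magma_def
proof (intro allI)
  fix x y z w
  have "ast (dot x y) (dot z w) = dot (dot (\<alpha> x) (\<alpha> y)) (dot z w)" using twist hom by simp
  also have "\<dots> = dot (dot (\<alpha> x) z) (dot (\<alpha> y) w)" using right_modular_medial assms(1) .
  finally show "ast (dot x y) (dot z w) = dot (ast x z) (ast y w)" using twist by simp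
qed

lemma double_magma_left_units_eq:
  assumes rm_dot: "right_modular dot" and rm_ast: "right_modular ast"
    and e: "left_unit dot e" and eb: "left_unit ast eb"
    and "double_magma dot ast"
  shows "eb = e"
proof -
  have interchange: "\<And>x y z w. ast (dot x y) (dot z w) = dot (ast x z) (ast y w)"
    using assms(5) unfolding double_magma_def by blast
  have e_unit: "\<And>x. dot e x = x" and eb_unit: "\<And>x. ast eb x = x"
    using e eb unfolding left_unit_def by blast+
  have absorb: "dot (ast e z) w = dot z w" for z w
    using interchange[of e eb z w] e_unit eb_unit by simp
  have "ast e z = z" for z
  proof -
    have "ast e z = dot (dot (ast e z) e) e" using right_modular_unit_swap[OF rm_dot e] e_unit by metis
    also have "\<dots> = z" using absorb right_modular_unit_twice[OF rm_dot e] by simp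
    finally show ?thesis .
  qed
  then show ?thesis using right_modular_left_unit_unique[OF rm_ast eb] unfolding left_unit_def by blast
qed

lemma double_magma_twist:
  assumes rm_dot: "right_modular dot" and rm_ast: "right_modular ast"
    and e_dot: "left_unit dot e" and e_ast: "left_unit ast e"
    and "double_magma dot ast"
    and \<alpha>_def: "\<alpha> = (\<lambda>x. ast (dot x e) e)"
  shows double_magma_twist_eq: "ast x y = dot (\<alpha> x) y"
    and double_magma_twist_involutive: "\<alpha> (\<alpha> x) = x"
    and double_magma_twist_hom: "\<alpha> (ast x y) = ast (\<alpha> x) (\<alpha> y)"
proof -
  have interchange: "\<And>x y z w. ast (dot x y) (dot z w) = dot (ast x z) (ast y w)"
    using assms(5) unfolding double_magma_def by blast
  have e_unit: "\<And>x. dot e x = x" and e_unit': "\<And>x. ast e x = x"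
    using e_dot e_ast unfolding left_unit_def by blast+
  note twice = right_modular_unit_twice[OF rm_dot e_dot]
  have twist: "ast x y = dot (\<alpha> x) y" for x y
  proof -
    have "ast (dot z e) y = dot (ast z e) y" for z
      using interchange[of z e e y] e_unit e_unit' by simp
    from this[of "dot x e"] show ?thesis using twice[of x] unfolding \<alpha>_def by simp
  qed
  then show "ast x y = dot (\<alpha> x) y" .
  have \<alpha>_alt: "\<alpha> x = dot (ast x e) e" for x
    using twist twice by metis
  have \<alpha>_e: "ast (\<alpha> x) e = dot x e" for x
    unfolding \<alpha>_def using right_modular_unit_twice[OF rm_ast e_ast] .
  show inv: "\<alpha> (\<alpha> x) = x" for x
    using \<alpha>_alt \<alpha>_e twice by simp
  have "\<alpha> (ast x y) = dot (dot (ast (\<alpha> x) e) (ast y e)) e"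
    using \<alpha>_alt interchange[of "\<alpha> x" y e e] twist inv e_unit by metis
  also have "\<dots> = dot (ast y e) (dot x e)"
    using \<alpha>_e right_modular_unit_swap[OF rm_dot e_dot] by simp
  also have "\<dots> = dot x (\<alpha> y)"
    using right_modular_left_commute[OF rm_dot e_dot] \<alpha>_alt by metis
  also have "\<dots> = ast (\<alpha> x) (\<alpha> y)" using twist inv by simp
  finally show "\<alpha> (ast x y) = ast (\<alpha> x) (\<alpha> y)" .
qed

lemma twist_formulas:
  assumes rm_dot: "right_modular dot"
    and e_dot: "left_unit dot e" and e_ast: "left_unit ast e"
    and twist: "\<And>x y. ast x y = dot (\<alpha> x) y"
    and hom: "\<And>x y. \<alpha> (dot x y) = dot (\<alpha> x) (\<alpha> y)"
  shows "\<alpha> x = dot (ast x e) e" and "\<alpha> x = ast (dot x e) e"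
proof -
  note twice = right_modular_unit_twice[OF rm_dot e_dot]
  show "\<alpha> x = dot (ast x e) e" using twist twice by simp
  have "left_unit dot (\<alpha> e)"
    using e_ast twist unfolding left_unit_def by metis
  then have "\<alpha> e = e" by (rule right_modular_left_unit_unique[OF rm_dot e_dot])
  then show "\<alpha> x = ast (dot x e) e" using twist hom twice by simp
qed

theorem theorem5p1:
  fixes dot :: "'a \<Rightarrow> 'a \<Rightarrow> 'a" and ast :: "'a \<Rightarrow> 'a \<Rightarrow> 'a" and e eb :: 'a
  assumes "right_modular dot" and "right_modular ast"
    and "left_unit dot e" and "left_unit ast eb"
  shows "(double_magma dot ast \<longleftrightarrow>
            (\<exists>\<alpha>. magma_automorphism ast \<alpha> \<and> involutive \<alpha> \<and>
                 (\<forall>x y. ast x y = dot (\<alpha> x) y)))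
         \<and> (\<forall>\<alpha>. magma_automorphism ast \<alpha> \<and> involutive \<alpha> \<and>
                 (\<forall>x y. ast x y = dot (\<alpha> x) y) \<longrightarrow>
               (\<forall>x. \<alpha> x = dot (ast x eb) eb \<and> \<alpha> x = ast (dot x eb) eb))"
proof -
  have dot_hom: "\<alpha> (dot x y) = dot (\<alpha> x) (\<alpha> y)" and double: "double_magma dot ast"
    if "magma_automorphism ast \<alpha>" "involutive \<alpha>" "\<forall>x y. ast x y = dot (\<alpha> x) y" for \<alpha> x y
    using that twist_automorphism_hom[of ast dot \<alpha>] involutive_apply_twice
      double_magma_if_twist[OF assms(1), of ast \<alpha>]
    unfolding magma_automorphism_def by metis+
  have twisted: "\<exists>\<alpha>. magma_automorphism ast \<alpha> \<and> involutive \<alpha> \<and> (\<forall>x y. ast x y = dot (\<alpha> x) y)"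
    if "double_magma dot ast"
  proof -
    have "eb = e" using double_magma_left_units_eq assms that .
    note twist = double_magma_twist[OF assms(1,2,3) assms(4)[unfolded \<open>eb = e\<close>] that refl]
    have "involutive (\<lambda>x. ast (dot x e) e)" unfolding involutive_def using twist(2) by auto
    then show ?thesis using twist involutive_bij unfolding magma_automorphism_def by blast
  qed
  have "\<alpha> x = dot (ast x eb) eb \<and> \<alpha> x = ast (dot x eb) eb"
    if "magma_automorphism ast \<alpha>" "involutive \<alpha>" "\<forall>x y. ast x y = dot (\<alpha> x) y" for \<alpha> x
  proof -
    have "eb = e" using double_magma_left_units_eq assms double[OF that] .
    then show ?thesis
      using twist_formulas[OF assms(1,3), of ast \<alpha> x] assms(4) that(3) dot_hom[OF that] by metis
  qed
  then show ?thesis using double twisted by blast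
qed

end
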